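(* Let $U\in\mathcal{U}_c$ and $\tau>1$. (a) If $U'(t)/U(t)\le(1-\delta)/t$ for $0<t\le\pi/2$ with some $0<\delta<1$, then for all sufficiently large $n$, every $0<r<1$, and every Carleson square $Q$ with side length $\varepsilon=\ell(Q)\le e^{-\tau\omega_U(n)}$, \[ \mu_{\varphi_U,r}(Q)\le e^{-\delta n/\omega_U(n)}\,\varepsilon. \] (b) If $\eta_U$ is differentiable and $\eta_U'(x)/\eta_U(x)=o(1/x)$ as $x\to\infty$, then for all sufficiently large $n$, every $0<r<1$, and every Carleson square $Q$ with $\varepsilon=\ell(Q)\le e^{-\tau\omega_U(n)}$, \[ \mu_{\varphi_U,r}(Q)\le e^{-8n/\omega_U(n)}\,\varepsilon. \]
   Context: The class $\mathcal{U}$: $U(t)=u(e^{it})$ with $u$ real-valued continuous on $\mathbb{T}$, $u(z)=u(\bar z)$, smooth except possibly at $1$, $U$ even, increasing on $[0,\pi]$, $U(0)=0$, and $h_U(t):=\int_t^\pi U(x)x^{-2}dx\to\infty$ as $t\to0^+$. $\mathcal{U}_c$: those $U\in\mathcal{U}$ with $U'(t)/U(t)\le\alpha/t$ for $0<t\le\pi/2$ for some $0<\alpha<1$. $\varphi_U:=\exp(-u-iv)$ with $u$ the Poisson extension, $v$ its harmonic conjugate. $\eta_U$: $U(t)=e^{-\eta_U(|\log t|)}$ for $0<t\le1$ with $U(t)\le e^{-1}$; $\omega_U$: $\eta_U(x/\omega_U(x))=\omega_U(x)$ for $x\ge0$ with $\eta_U(x)\ge1$. Carleson square: $Q(r_0,t_0)=\{re^{it}\in\overline{\mathbb{D}}:r\ge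 r_0,|t-t_0|\le(1-r_0)\pi\}$, $\ell(Q)=1-r_0$. $\mu_{\varphi,r}(E)=\sigma(\{z\in\mathbb{T}:|\varphi(z)|>r,\varphi(z)\in E\})$ with $\sigma$ normalized Lebesgue measure on $\mathbb{T}$. *)

theory Defs
  imports "HOL-Analysis.Analysis" "HOL-Library.Landau_Symbols"
begin

text \<open>U is the function t \<mapsto> u(e^{it}) on the real line (2pi-periodic).
  Smoothness of u on the circle minus the point 1 = C-infinity of U on the open interval (0, 2 pi).\<close>

definition smooth_on :: "real set \<Rightarrow> (real \<Rightarrow> real) \<Rightarrow> bool" where
  "smooth_on S f \<longleftrightarrow> (\<forall>k. \<forall>x\<in>S. ((deriv ^^ k) f) differentiable (at x))"

definition h_U :: "(real \<Rightarrow> real) \<Rightarrow> real \<Rightarrow> real" where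
  "h_U U t = integral {t..pi} (\<lambda>x. U x / x\<^sup>2)"

definition class_U :: "(real \<Rightarrow> real) \<Rightarrow> bool" where
  "class_U U \<longleftrightarrow>
     continuous_on UNIV U \<and>
     (\<forall>t. U (t + 2*pi) = U t) \<and>
     (\<forall>t. U (-t) = U t) \<and>
     smooth_on {0<..<2*pi} U \<and>
     mono_on {0..pi} U \<and>
     U 0 = 0 \<and>
     filterlim (h_U U) at_top (at_right 0)"

definition class_Uc :: "(real \<Rightarrow> real) \<Rightarrow> bool" where
  "class_Uc U \<longleftrightarrow> class_U U \<and>
     (\<exists>\<alpha>. 0 < \<alpha> \<and> \<alpha> < 1 \<and> (\<forall>t. 0 < t \<and> t \<le> pi/2 \<longrightarrow> deriv U t / U t \<le> \<alpha> / t))"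

text \<open>Herglotz integral: u + i v with u the Poisson extension of U and v its harmonic conjugate
  (normalised by v(0) = 0); phi_U = exp(-u - i v) on the open unit disc.\<close>

definition herglotz_U :: "(real \<Rightarrow> real) \<Rightarrow> complex \<Rightarrow> complex" where
  "herglotz_U U z = integral {-pi..pi} (\<lambda>s. ((cis s + z) / (cis s - z)) * complex_of_real (U s))
                      / complex_of_real (2*pi)"

definition phi_U :: "(real \<Rightarrow> real) \<Rightarrow> complex \<Rightarrow> complex" where
  "phi_U U z = exp (- herglotz_U U z)"

text \<open>Boundary values of phi_U on the circle: radial limits (they exist almost everywhere).\<close>

definition phi_U_bd :: "(real \<Rightarrow> real) \<Rightarrow> real \<Rightarrow> complex" where
  "phi_U_bd U t = Lim (at_left (1::real)) (\<lambda>\<rho>. phi_U U (complex_of_real \<rho> * cis t))"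

definition outer_lebesgue :: "real set \<Rightarrow> ennreal" where
  "outer_lebesgue S = (INF A\<in>{A. A \<in> sets lebesgue \<and> S \<subseteq> A}. emeasure lebesgue A)"

text \<open>mu_{phi,r}(E) = sigma({z in T : |phi(z)| > r, phi(z) in E}), sigma normalised arc length.\<close>

definition mu_phi :: "(real \<Rightarrow> complex) \<Rightarrow> real \<Rightarrow> complex set \<Rightarrow> ennreal" where
  "mu_phi f r E = outer_lebesgue {t \<in> {-pi..<pi}. cmod (f t) > r \<and> f t \<in> E} / ennreal (2*pi)"

text \<open>Carleson square Q(r0,t0); its side length is 1 - r0.\<close>

definition carleson_square :: "real \<Rightarrow> real \<Rightarrow> complex set" where
  "carleson_square r0 t0 =
     {complex_of_real \<rho> * cis t | \<rho> t. r0 \<le> \<rho> \<and> \<rho> \<le> 1 \<and> \<bar>t - t0\<bar> \<le> (1 - r0) * pi}"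

text \<open>eta_U: U(t) = exp(-eta_U(|log t|)), i.e. eta_U(x) = -log U(e^{-x}) (x \<ge> 0).\<close>

definition eta_U :: "(real \<Rightarrow> real) \<Rightarrow> real \<Rightarrow> real" where
  "eta_U U x = - ln (U (exp (- x)))"

definition omega_U :: "(real \<Rightarrow> real) \<Rightarrow> real \<Rightarrow> real" where
  "omega_U U x = (THE w. 1 \<le> w \<and> eta_U U (x / w) = w)"

end

theory Submission
  imports Defs "HOL-Complex_Analysis.Complex_Analysis"
begin

text \<open>At a point t \<noteq> 0 of the circle U is differentiable, so U(s) - U(t) is bounded by a
  multiple of |e^{is} - e^{it}| and the Herglotz integral of U - U(t) converges boundedly
  along the radius; its limit is purely imaginary. Hence the boundary values of phi_U have
  modulus exp(-U(t)), and phi_U(e^{it}) can only lie in a Carleson square of side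
  \<epsilon> \<le> 1/2 where U(t) \<le> -ln(1 - \<epsilon>) \<le> 2\<epsilon>. Writing t = e^{-x}, such points satisfy
  eta_U(x) \<ge> -ln \<epsilon> - ln 2 with x > m := n / omega_U(n), and it suffices to show
  x \<ge> -ln \<epsilon> + c m - ln pi. In (a) this follows from the linear growth bound
  eta_U(x) \<le> eta_U(m) + (1 - \<delta>)(x - m), the integrated form of the hypothesis on U'/U;
  in (b) from ln eta_U(x) - ln eta_U(m) \<le> (ln x - ln m) / K for any fixed K, and Bernoulli's
  inequality.\<close>

lemma shiftpath_circlepath_half: "shiftpath (1/2) (circlepath 0 1) = part_circlepath 0 1 (-pi) pi"
proof
  fix x :: real
  have e1: "exp (2 * of_real pi * \<i> * of_real (1/2 + x)) = exp (\<i> * of_real ((1 - x) * (-pi) + x * pi))"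
  proof -
    have "exp (2 * of_real pi * \<i> * of_real (1/2 + x))
        = exp (\<i> * of_real ((1 - x) * (-pi) + x * pi) + of_real pi * \<i> * 2)"
      by (rule arg_cong[where f=exp]) (simp add: algebra_simps)
    also have "\<dots> = exp (\<i> * of_real ((1 - x) * (-pi) + x * pi))"
      by (simp add: exp_add exp_two_pi_i mult.commute mult.left_commute)
    finally show ?thesis .
  qed
  have e2: "exp (2 * of_real pi * \<i> * of_real (1/2 + x - 1)) = exp (\<i> * of_real ((1 - x) * (-pi) + x * pi))"
    by (rule arg_cong[where f=exp]) (simp add: algebra_simps)
  show "shiftpath (1/2) (circlepath 0 1) x = part_circlepath 0 1 (-pi) pi x"
    unfolding shiftpath_def circlepath part_circlepath_def linepath_def
    using e1 e2 by (simp add: scaleR_conv_of_real)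
qed

lemma herglotz_kernel_has_integral:
  assumes "norm z < 1"
  shows "((\<lambda>s. (cis s + z) / (cis s - z)) has_integral (2*pi)) {-pi..pi}"
proof -
  have circle: "((\<lambda>u. 1/(u-z)) has_contour_integral (2 * of_real pi * \<i>)) (circlepath 0 1)"
    using Cauchy_integral_circlepath_simple[of "\<lambda>u. 1" 0 1 z] assms by simp
  have "((\<lambda>u. 1/(u-z)) has_contour_integral (2 * of_real pi * \<i>)) (part_circlepath 0 1 (-pi) pi)"
    using has_contour_integral_shiftpath[OF circle, of "1/2"] by (simp add: shiftpath_circlepath_half)
  then have "((\<lambda>s. 1/(cis s - z) * \<i> * cis s) has_integral (2 * of_real pi * \<i>)) {-pi..pi}"
    using has_contour_integral_part_circlepath_iff[of "-pi" pi] by simp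
  from has_integral_mult_left[OF this, of "-2*\<i>"]
  have four_pi: "((\<lambda>s. 2 * cis s / (cis s - z)) has_integral (4 * pi)) {-pi..pi}"
    by (simp add: algebra_simps)
  have two_pi: "((\<lambda>s. 1::complex) has_integral (2 * pi)) {-pi..pi}"
    using has_integral_const_real[of "1::complex" "-pi" pi] by (simp add: scaleR_conv_of_real)
  have "((\<lambda>s. 2 * cis s / (cis s - z) - 1) has_integral (2 * pi)) {-pi..pi}"
    using has_integral_diff[OF four_pi two_pi] by simp
  moreover have "2 * cis s / (cis s - z) - 1 = (cis s + z) / (cis s - z)" for s
  proof -
    have "cis s - z \<noteq> 0"
      using assms by (metis eq_iff_diff_eq_0 norm_cis order.irrefl)
    then show ?thesis by (simp add: field_simps)
  qed
  ultimately show ?thesis by simp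
qed

lemma DERIV_imp_local_linear_bound:
  fixes f :: "real \<Rightarrow> real"
  assumes "DERIV f t :> D" "e > 0"
  shows "\<exists>d>0. \<forall>s. \<bar>s - t\<bar> < d \<longrightarrow> \<bar>f s - f t - D * (s - t)\<bar> \<le> e * \<bar>s - t\<bar>"
proof -
  have "((\<lambda>y. (f y - f t) / (y - t)) \<longlongrightarrow> D) (at t)"
    using assms(1) has_field_derivative_iff by blast
  then have "eventually (\<lambda>y. dist ((f y - f t) / (y - t)) D < e) (at t)"
    using assms(2) unfolding tendsto_iff by blast
  then obtain d where d: "d > 0"
    and close: "\<And>y. y \<noteq> t \<Longrightarrow> dist y t < d \<Longrightarrow> dist ((f y - f t) / (y - t)) D < e"
    unfolding eventually_at by auto
  have "\<bar>f s - f t - D * (s - t)\<bar> \<le> e * \<bar>s - t\<bar>" if "\<bar>s - t\<bar> < d" for s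
  proof (cases "s = t")
    case False
    then have "\<bar>(f s - f t) / (s - t) - D\<bar> * \<bar>s - t\<bar> \<le> e * \<bar>s - t\<bar>"
      using close[of s] that by (intro mult_right_mono) (auto simp: dist_real_def)
    also have "\<bar>(f s - f t) / (s - t) - D\<bar> * \<bar>s - t\<bar> = \<bar>f s - f t - D * (s - t)\<bar>"
      using False by (simp add: abs_mult[symmetric] field_simps)
    finally show ?thesis .
  qed simp
  with d show ?thesis by blast
qed

lemma norm_cis_diff_ge_abs_sin: "\<bar>sin (s - t)\<bar> \<le> norm (cis s - cis t)"
proof -
  have "cis s - cis t = cis t * (cis (s - t) - 1)"
    by (simp add: algebra_simps cis_mult)
  then have "norm (cis s - cis t) = norm (cis (s - t) - 1)"
    by (simp add: norm_mult)
  moreover have "\<bar>Im (cis (s - t) - 1)\<bar> \<le> norm (cis (s - t) - 1)"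
    by (rule abs_Im_le_cmod)
  ultimately show ?thesis by simp
qed

lemma DERIV_imp_local_chord_bound:
  fixes f :: "real \<Rightarrow> real"
  assumes "DERIV f t :> D"
  shows "\<exists>d>0. \<forall>s. \<bar>s - t\<bar> < d \<longrightarrow> \<bar>f s - f t\<bar> \<le> (2 * \<bar>D\<bar> + 2) * norm (cis s - cis t)"
proof -
  obtain d1 where d1: "d1 > 0" "\<And>s. \<bar>s - t\<bar> < d1 \<Longrightarrow> \<bar>f s - f t - D * (s - t)\<bar> \<le> 1 * \<bar>s - t\<bar>"
    using DERIV_imp_local_linear_bound[OF assms, of 1] by auto
  have sin_deriv: "DERIV (\<lambda>s. sin (s - t)) t :> 1"
    by (auto intro!: derivative_eq_intros)
  obtain d2 where d2: "d2 > 0"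
    "\<And>s. \<bar>s - t\<bar> < d2 \<Longrightarrow> \<bar>sin (s - t) - sin (t - t) - 1 * (s - t)\<bar> \<le> 1/2 * \<bar>s - t\<bar>"
    using DERIV_imp_local_linear_bound[OF sin_deriv, of "1/2"] by auto
  have "\<bar>f s - f t\<bar> \<le> (2 * \<bar>D\<bar> + 2) * norm (cis s - cis t)" if s: "\<bar>s - t\<bar> < min d1 d2" for s
  proof -
    have "\<bar>s - t\<bar> \<le> \<bar>sin (s - t)\<bar> + \<bar>sin (s - t) - (s - t)\<bar>"
      using abs_triangle_ineq4[of "sin (s - t)" "sin (s - t) - (s - t)"] by simp
    then have chord: "\<bar>s - t\<bar> \<le> 2 * norm (cis s - cis t)"
      using d2(2)[of s] s norm_cis_diff_ge_abs_sin[of s t] by (simp; linarith)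
    have "\<bar>f s - f t\<bar> \<le> (\<bar>D\<bar> + 1) * \<bar>s - t\<bar>"
      using d1(2)[of s] s abs_mult[of D "s - t"] by (simp add: algebra_simps)
    also have "\<dots> \<le> (\<bar>D\<bar> + 1) * (2 * norm (cis s - cis t))"
      using chord by (rule mult_left_mono) simp
    finally show ?thesis by (simp add: algebra_simps)
  qed
  moreover have "min d1 d2 > 0" using d1 d2 by simp
  ultimately show ?thesis by blast
qed

lemma cis_neq_cis:
  assumes "s \<in> {-pi..pi}" "t \<in> {-pi<..<pi}" "s \<noteq> t"
  shows "cis s \<noteq> cis t"
proof
  assume "cis s = cis t"
  then have "sin s = sin t \<and> cos s = cos t" by (metis cis.sel)
  then obtain n :: int where n: "s = t + 2 * pi * n" using sin_cos_eq_iff by blast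
  with assms have "\<bar>2 * pi * n\<bar> < 2 * pi" by auto
  then have "n = 0" by (simp add: abs_mult)
  with n assms show False by simp
qed

lemma chord_bounded_below_off_nhd:
  assumes "t \<in> {-pi<..<pi}" "d > 0"
  shows "\<exists>c>0. \<forall>s\<in>{-pi..pi}. d \<le> \<bar>s - t\<bar> \<longrightarrow> c \<le> norm (cis s - cis t)"
proof -
  define S where "S = {-pi..pi} \<inter> {s. d \<le> \<bar>s - t\<bar>}"
  show ?thesis
  proof (cases "S = {}")
    case True
    then show ?thesis by (auto simp: S_def intro: exI[of _ 1])
  next
    case False
    have "closed {s. d \<le> \<bar>s - t\<bar>}"
      by (intro closed_Collect_le continuous_intros)
    then have "compact S" by (simp add: S_def compact_Int_closed)
    moreover have "continuous_on S (\<lambda>s. norm (cis s - cis t))"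
      by (intro continuous_intros)
    ultimately obtain s0 where s0: "s0 \<in> S" "\<And>s. s \<in> S \<Longrightarrow> norm (cis s0 - cis t) \<le> norm (cis s - cis t)"
      using continuous_attains_inf[OF _ False] by blast
    have "cis s0 \<noteq> cis t"
      using s0(1) assms by (intro cis_neq_cis) (auto simp: S_def)
    then show ?thesis
      using s0(2) by (intro exI[of _ "norm (cis s0 - cis t)"]) (auto simp: S_def)
  qed
qed

lemma DERIV_imp_chord_bound:
  fixes f :: "real \<Rightarrow> real"
  assumes t: "t \<in> {-pi<..<pi}" and D: "DERIV f t :> D" and cont: "continuous_on {-pi..pi} f"
  shows "\<exists>B\<ge>0. \<forall>s\<in>{-pi..pi}. \<bar>f s - f t\<bar> \<le> B * norm (cis s - cis t)"
proof -
  obtain d where d: "d > 0" and near: "\<And>s. \<bar>s - t\<bar> < d \<Longrightarrow> \<bar>f s - f t\<bar> \<le> (2 * \<bar>D\<bar> + 2) * norm (cis s - cis t)"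
    using DERIV_imp_local_chord_bound[OF D] by blast
  obtain c where c: "c > 0" and far: "\<And>s. s \<in> {-pi..pi} \<Longrightarrow> d \<le> \<bar>s - t\<bar> \<Longrightarrow> c \<le> norm (cis s - cis t)"
    using chord_bounded_below_off_nhd[OF t d] by blast
  obtain M where M: "\<And>s. s \<in> {-pi..pi} \<Longrightarrow> \<bar>f s\<bar> \<le> M"
    using compact_imp_bounded[OF compact_continuous_image[OF cont]] unfolding bounded_iff by force
  define B where "B = max (2 * \<bar>D\<bar> + 2) (2 * M / c)"
  have "\<bar>f s - f t\<bar> \<le> B * norm (cis s - cis t)" if s: "s \<in> {-pi..pi}" for s
  proof (cases "\<bar>s - t\<bar> < d")
    case True
    have "(2 * \<bar>D\<bar> + 2) * norm (cis s - cis t) \<le> B * norm (cis s - cis t)"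
      by (rule mult_right_mono) (auto simp: B_def)
    with near[OF True] show ?thesis by linarith
  next
    case False
    have "\<bar>f s - f t\<bar> \<le> 2 * M" using M[OF s] M[of t] t by auto
    also have "\<dots> = (2 * M / c) * c" using c by simp
    also have "\<dots> \<le> B * norm (cis s - cis t)"
      using far[OF s] False c M[OF s] by (intro mult_mono) (auto simp: B_def)
    finally show ?thesis .
  qed
  moreover have "B \<ge> 0" by (simp add: B_def)
  ultimately show ?thesis by blast
qed

lemma norm_cis_diff_le_twice_norm_cis_diff_scaled:
  assumes "1/4 \<le> \<rho>" "\<rho> \<le> 1"
  shows "norm (cis s - cis t) \<le> 2 * norm (cis s - of_real \<rho> * cis t)"
proof -
  have sq: "(norm (cis s - of_real r * cis t))\<^sup>2 = 1 - 2 * r * cos (s - t) + r\<^sup>2" for r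
  proof -
    have "(norm (cis s - of_real r * cis t))\<^sup>2 = (cos s - r * cos t)\<^sup>2 + (sin s - r * sin t)\<^sup>2"
      unfolding cmod_power2 by simp
    also have "\<dots> = (sin s ^ 2 + cos s ^ 2) - 2 * r * (cos s * cos t + sin s * sin t) + r\<^sup>2 * (sin t ^ 2 + cos t ^ 2)"
      by (simp only: power2_eq_square algebra_simps)
    finally show ?thesis by (simp add: cos_diff)
  qed
  have "1 - 2 * \<rho> * cos (s - t) + \<rho>\<^sup>2 - \<rho> * (2 - 2 * cos (s - t)) = (1 - \<rho>)\<^sup>2"
    by (simp add: power2_eq_square algebra_simps)
  then have "\<rho> * (2 - 2 * cos (s - t)) \<le> 1 - 2 * \<rho> * cos (s - t) + \<rho>\<^sup>2"
    by (metis diff_ge_0_iff_ge zero_le_power2)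
  moreover have "(1/4) * (2 - 2 * cos (s - t)) \<le> \<rho> * (2 - 2 * cos (s - t))"
    using assms by (intro mult_right_mono) auto
  ultimately have "(norm (cis s - cis t))\<^sup>2 \<le> (2 * norm (cis s - of_real \<rho> * cis t))\<^sup>2"
    using sq[of 1] sq[of \<rho>] by (simp add: power_mult_distrib)
  then show ?thesis
    by (rule power2_le_imp_le) simp
qed

lemma Re_cis_kernel_on_circle: "Re ((cis s + cis t) / (cis s - cis t)) = 0"
proof -
  have "Re (cis s + cis t) * Re (cis s - cis t) + Im (cis s + cis t) * Im (cis s - cis t) = 0"
    by (simp add: algebra_simps)
  then show ?thesis by (simp only: Re_divide')
qed

lemma herglotz_U_eq_plus_integral_diff:
  fixes U :: "real \<Rightarrow> real"
  assumes z: "norm z < 1" and cont: "continuous_on {-pi..pi} U"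
  shows "herglotz_U U z = of_real (U t) +
      integral {-pi..pi} (\<lambda>s. (cis s + z) / (cis s - z) * of_real (U s - U t)) / of_real (2*pi)"
proof -
  have "cis s \<noteq> z" for s
    using z by (metis norm_cis order.irrefl)
  then have "continuous_on {-pi..pi} (\<lambda>s. (cis s + z) / (cis s - z) * of_real (U s - U t))"
    by (intro continuous_intros cont) auto
  then have "(\<lambda>s. (cis s + z) / (cis s - z) * of_real (U s - U t)) integrable_on {-pi..pi}"
    by (rule integrable_continuous_interval)
  from has_integral_add[OF has_integral_mult_left[OF herglotz_kernel_has_integral[OF z], of "of_real (U t)"]
      integrable_integral[OF this]]
  have "((\<lambda>s. (cis s + z) / (cis s - z) * of_real (U t) + (cis s + z) / (cis s - z) * of_real (U s - U t))
      has_integral (2*pi) * of_real (U t) + integral {-pi..pi} (\<lambda>s. (cis s + z) / (cis s - z) * of_real (U s - U t)))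
      {-pi..pi}" by simp
  moreover have "(\<lambda>s. (cis s + z) / (cis s - z) * of_real (U t) + (cis s + z) / (cis s - z) * of_real (U s - U t))
      = (\<lambda>s. (cis s + z) / (cis s - z) * of_real (U s))"
    by (rule ext) (simp add: right_diff_distrib)
  ultimately show ?thesis
    unfolding herglotz_U_def by (simp add: integral_unique field_simps)
qed

lemma herglotz_integrand_bounded:
  assumes chord: "\<bar>U s - U t\<bar> \<le> B * norm (cis s - cis t)" and "0 \<le> B" "1/4 \<le> r" "r \<le> 1"
  shows "norm ((cis s + of_real r * cis t) / (cis s - of_real r * cis t) * of_real (U s - U t)) \<le> 4 * B"
proof (cases "cis s = cis t")
  case True
  with chord have "U s = U t" by simp
  then show ?thesis using \<open>0 \<le> B\<close> by simp
next
  case False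
  then have pos: "norm (cis s - cis t) > 0" by simp
  have "norm (cis s + of_real r * cis t) \<le> 2"
    using norm_triangle_ineq[of "cis s" "of_real r * cis t"] assms by (simp add: norm_mult)
  moreover have "norm (cis s - cis t) / 2 \<le> norm (cis s - of_real r * cis t)"
    using norm_cis_diff_le_twice_norm_cis_diff_scaled[of r s t] assms by simp
  ultimately have "norm (cis s + of_real r * cis t) / norm (cis s - of_real r * cis t) \<le> 2 / (norm (cis s - cis t) / 2)"
    using pos by (intro frac_le) auto
  then have "norm ((cis s + of_real r * cis t) / (cis s - of_real r * cis t) * of_real (U s - U t))
      \<le> 2 / (norm (cis s - cis t) / 2) * (B * norm (cis s - cis t))"
    unfolding norm_mult norm_divide norm_of_real using chord by (intro mult_mono) auto
  also have "\<dots> = 4 * B" using pos by (simp add: field_simps)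
  finally show ?thesis .
qed

lemma herglotz_U_radial_limit:
  fixes U :: "real \<Rightarrow> real"
  assumes t: "t \<in> {-pi<..<pi}" and D: "DERIV U t :> D" and cont: "continuous_on {-pi..pi} U"
  shows "((\<lambda>r. herglotz_U U (of_real r * cis t)) \<longlongrightarrow> of_real (U t) +
     integral {-pi..pi} (\<lambda>s. (cis s + cis t) / (cis s - cis t) * of_real (U s - U t)) / of_real (2*pi)) (at_left 1)"
proof -
  obtain B where B: "B \<ge> 0" "\<And>s. s \<in> {-pi..pi} \<Longrightarrow> \<bar>U s - U t\<bar> \<le> B * norm (cis s - cis t)"
    using DERIV_imp_chord_bound[OF t D cont] by blast
  define f where "f r s = (cis s + of_real r * cis t) / (cis s - of_real r * cis t) * of_real (U s - U t)" for r s
  have f_integrable: "f r integrable_on {-pi..pi}" if "r < 1" "0 \<le> r" for r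
  proof -
    have "cis s - of_real r * cis t \<noteq> 0" for s
    proof
      assume "cis s - of_real r * cis t = 0"
      then have "norm (cis s) = norm (of_real r * cis t)" by simp
      with that show False by (simp add: norm_mult)
    qed
    then have "continuous_on {-pi..pi} (f r)"
      unfolding f_def by (intro continuous_intros cont) auto
    then show ?thesis by (rule integrable_continuous_interval)
  qed
  have f_tendsto: "(\<lambda>n. f (S n) s) \<longlonglongrightarrow> f 1 s" if "S \<longlonglongrightarrow> 1" "s \<in> {-pi..pi}" for S s
  proof (cases "cis s = cis t")
    case True
    with B(2)[OF that(2)] show ?thesis by (simp add: f_def)
  next
    case False
    with that(1) show ?thesis
      unfolding f_def by (intro tendsto_intros) auto
  qed
  show ?thesis
  proof (rule tendsto_at_left_sequentially[of "1/2"])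
    fix S :: "nat \<Rightarrow> real"
    assume S: "\<And>n. S n < 1" "\<And>n. 1/2 < S n" "S \<longlonglongrightarrow> 1"
    have lim: "(\<lambda>n. integral {-pi..pi} (f (S n))) \<longlonglongrightarrow> integral {-pi..pi} (f 1)"
    proof (rule dominated_convergence(2)[where h = "\<lambda>_. 4 * B"])
      show "f (S n) integrable_on {-pi..pi}" for n
        using S(1,2)[of n] by (intro f_integrable) auto
      show "(\<lambda>_. 4 * B) integrable_on {-pi..pi}"
        by (intro integrable_continuous_interval continuous_intros)
      show "norm (f (S n) s) \<le> 4 * B" if "s \<in> {-pi..pi}" for n s
        unfolding f_def using S(1,2)[of n] B that by (intro herglotz_integrand_bounded) auto
      show "(\<lambda>n. f (S n) s) \<longlonglongrightarrow> f 1 s" if "s \<in> {-pi..pi}" for s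
        by (rule f_tendsto[OF S(3) that])
    qed
    have eq: "herglotz_U U (of_real (S n) * cis t) = of_real (U t) + integral {-pi..pi} (f (S n)) / of_real (2*pi)" for n
      using herglotz_U_eq_plus_integral_diff[OF _ cont] S(1,2)[of n] by (simp add: norm_mult f_def[abs_def])
    have f1: "f 1 = (\<lambda>s. (cis s + cis t) / (cis s - cis t) * of_real (U s - U t))"
      by (rule ext) (simp add: f_def)
    show "(\<lambda>n. herglotz_U U (of_real (S n) * cis t)) \<longlonglongrightarrow>
        of_real (U t) + integral {-pi..pi} (\<lambda>s. (cis s + cis t) / (cis s - cis t) * of_real (U s - U t)) / of_real (2*pi)"
      unfolding eq f1[symmetric] by (intro tendsto_intros lim) simp
  qed simp
qed

lemma norm_phi_U_bd:
  fixes U :: "real \<Rightarrow> real"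
  assumes "t \<in> {-pi<..<pi}" "DERIV U t :> D" "continuous_on {-pi..pi} U"
  shows "norm (phi_U_bd U t) = exp (- U t)"
proof -
  define g where "g s = (cis s + cis t) / (cis s - cis t) * of_real (U s - U t)" for s
  define L where "L = of_real (U t) + integral {-pi..pi} g / of_real (2*pi)"
  have "((\<lambda>r. phi_U U (of_real r * cis t)) \<longlongrightarrow> exp (- L)) (at_left 1)"
    unfolding phi_U_def L_def g_def by (intro tendsto_intros herglotz_U_radial_limit[OF assms])
  then have "phi_U_bd U t = exp (- L)"
    unfolding phi_U_bd_def by (intro tendsto_Lim) (simp_all add: trivial_limit_at_left_real)
  moreover have "Re (integral {-pi..pi} g) = 0"
  \<comment> \<open>a non-integrable g has integral 0 by convention, so no integrability argument is needed\<close>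
  proof (cases "g integrable_on {-pi..pi}")
    case True
    have Re_mult_real: "Re (w * of_real c) = Re w * c" for w c
      by simp
    have "Re (g s) = 0" for s
      unfolding g_def Re_mult_real Re_cis_kernel_on_circle by simp
    with has_integral_Re[OF integrable_integral[OF True]] show ?thesis
      using has_integral_unique[OF _ has_integral_0] by auto
  qed (simp add: not_integrable_integral)
  ultimately show ?thesis by (simp add: L_def)
qed

lemma class_UD:
  assumes "class_U U"
  shows "continuous_on UNIV U" "\<And>t. U (-t) = U t" "smooth_on {0<..<2*pi} U"
    "mono_on {0..pi} U" "U 0 = 0" "filterlim (h_U U) at_top (at_right 0)"
  using assms unfolding class_U_def by auto

lemma class_U_DERIV:
  assumes "class_U U" "t \<in> {0<..<2*pi}"
  shows "DERIV U t :> deriv U t"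
proof -
  have "((deriv ^^ 0) U) differentiable (at t)"
    using class_UD(3)[OF assms(1)] assms(2) unfolding smooth_on_def by blast
  then show ?thesis by (simp add: DERIV_deriv_iff_real_differentiable)
qed

lemma class_U_DERIV_off_zero:
  assumes U: "class_U U" and t: "t \<in> {-pi<..<pi}" "t \<noteq> 0"
  shows "\<exists>D. DERIV U t :> D"
proof (cases "t > 0")
  case True
  then show ?thesis using class_U_DERIV[OF U, of t] t by auto
next
  case False
  then have d: "DERIV U (-t) :> deriv U (-t)"
    using class_U_DERIV[OF U, of "-t"] t by auto
  have m: "DERIV (\<lambda>x. -x) t :> -1"
    by (auto intro!: derivative_eq_intros)
  have "DERIV (\<lambda>x. U (-x)) t :> deriv U (-t) * (-1)"
    using DERIV_chain2[where g = "\<lambda>x. -x" and x = t, OF _ m] d by simp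
  moreover have "(\<lambda>x. U (-x)) = U" using class_UD(2)[OF U] by auto
  ultimately show ?thesis by auto
qed

lemma class_U_nonneg:
  assumes "class_U U" "t \<in> {0..pi}"
  shows "U t \<ge> 0"
  using class_UD(4,5)[OF assms(1)] assms(2) by (metis atLeastAtMost_iff mono_onD order_refl pi_ge_zero)

text \<open>If U vanished at some t > 0, by monotonicity it would vanish on [0, t] and h_U would stay bounded.\<close>

lemma class_U_pos:
  assumes U: "class_U U" and t: "t \<in> {0<..pi}"
  shows "U t > 0"
proof (rule ccontr)
  assume "\<not> U t > 0"
  with class_U_nonneg[OF U, of t] t have "U t = 0" by auto
  then have zero: "U x = 0" if "x \<in> {0..t}" for x
    using class_U_nonneg[OF U, of x] mono_onD[OF class_UD(4)[OF U], of x t] that t by auto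
  have const: "h_U U x = h_U U t" if x: "x \<in> {0<..t}" for x
  proof -
    have "(\<lambda>y. U y / y\<^sup>2) integrable_on {x..pi}"
      using x by (intro integrable_continuous_interval continuous_intros
          continuous_on_subset[OF class_UD(1)[OF U]]) auto
    then have "integral {x..t} (\<lambda>y. U y / y\<^sup>2) + integral {t..pi} (\<lambda>y. U y / y\<^sup>2) = integral {x..pi} (\<lambda>y. U y / y\<^sup>2)"
      using x t by (intro Henstock_Kurzweil_Integration.integral_combine) auto
    moreover have "integral {x..t} (\<lambda>y. U y / y\<^sup>2) = 0"
      using x by (subst integral_cong[of _ _ "\<lambda>_. 0"]) (auto simp: zero)
    ultimately show ?thesis unfolding h_U_def by simp
  qed
  have "eventually (\<lambda>x. h_U U t + 1 \<le> h_U U x) (at_right 0)"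
    using class_UD(6)[OF U] unfolding filterlim_at_top by blast
  moreover have "eventually (\<lambda>x. x \<in> {0<..<t}) (at_right 0)"
    using t by (intro eventually_at_right_real) auto
  ultimately have "eventually (\<lambda>x. False) (at_right (0::real))"
  proof eventually_elim
    case (elim x)
    then have "h_U U x = h_U U t" using const[of x] by auto
    with elim show False by linarith
  qed
  then show False by simp
qed

lemma ln_diff_le_of_log_deriv_le:
  fixes f :: "real \<Rightarrow> real"
  assumes "0 < a" "a \<le> b"
    and pos: "\<And>y. a \<le> y \<Longrightarrow> y \<le> b \<Longrightarrow> 0 < f y"
    and diff: "\<And>y. a \<le> y \<Longrightarrow> y \<le> b \<Longrightarrow> f differentiable (at y)"
    and log_deriv: "\<And>y. a \<le> y \<Longrightarrow> y \<le> b \<Longrightarrow> deriv f y / f y \<le> \<kappa> / y"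
  shows "ln (f b) - ln (f a) \<le> \<kappa> * (ln b - ln a)"
proof -
  have "ln (f b) - \<kappa> * ln b \<le> ln (f a) - \<kappa> * ln a"
  proof (rule DERIV_nonpos_imp_nonincreasing[OF \<open>a \<le> b\<close>])
    fix y assume y: "a \<le> y" "y \<le> b"
    have "DERIV f y :> deriv f y"
      using diff[OF y] by (simp add: DERIV_deriv_iff_real_differentiable)
    then have "DERIV (\<lambda>y. ln (f y) - \<kappa> * ln y) y :> deriv f y / f y - \<kappa> / y"
      using pos[OF y] y \<open>0 < a\<close> by (auto intro!: derivative_eq_intros simp: field_simps)
    with log_deriv[OF y] show "\<exists>d. DERIV (\<lambda>y. ln (f y) - \<kappa> * ln y) y :> d \<and> d \<le> 0"
      by force
  qed
  then show ?thesis by (simp add: algebra_simps)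
qed

lemma minus_ln_one_minus_le:
  fixes \<epsilon> :: real
  assumes "0 < \<epsilon>" "\<epsilon> \<le> 1/2"
  shows "- ln (1 - \<epsilon>) \<le> 2 * \<epsilon>"
proof -
  have "- \<epsilon> - 2 * \<epsilon>\<^sup>2 \<le> ln (1 - \<epsilon>)"
    using ln_one_minus_pos_lower_bound[of \<epsilon>] assms by simp
  moreover have "\<epsilon>\<^sup>2 \<le> \<epsilon> * (1/2)"
    unfolding power2_eq_square using assms by (intro mult_left_mono) auto
  ultimately show ?thesis by linarith
qed

text \<open>The points -pi and 0, where the boundary modulus is not computed, form a null set.\<close>

lemma mu_phi_carleson_square_le:
  assumes U: "class_U U" and r0: "1/2 \<le> r0" "r0 < 1" and "B \<ge> 0"
    and sublevel: "\<And>t. t \<in> {0<..pi} \<Longrightarrow> U t \<le> 2 * (1 - r0) \<Longrightarrow> t \<le> B"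
  shows "mu_phi (phi_U_bd U) r (carleson_square r0 t0) \<le> ennreal (B / pi)"
proof -
  define S where "S = {t \<in> {-pi..<pi}. cmod (phi_U_bd U t) > r \<and> phi_U_bd U t \<in> carleson_square r0 t0}"
  define A where "A = {-pi, 0} \<union> {-B..B}"
  have "t \<in> A" if tS: "t \<in> S" for t
  proof (cases "t = -pi \<or> t = 0")
    case False
    then have t: "t \<in> {-pi<..<pi}" "t \<noteq> 0" using tS by (auto simp: S_def)
    obtain D where "DERIV U t :> D" using class_U_DERIV_off_zero[OF U t] by blast
    then have "norm (phi_U_bd U t) = exp (- U t)"
      using norm_phi_U_bd[OF t(1)] continuous_on_subset[OF class_UD(1)[OF U]] by blast
    moreover obtain \<rho> s where "phi_U_bd U t = complex_of_real \<rho> * cis s" "r0 \<le> \<rho>" "\<rho> \<le> 1"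
      using tS by (auto simp: S_def carleson_square_def)
    ultimately have "exp (ln r0) \<le> exp (- U t)" using r0 by (simp add: norm_mult)
    then have "U t \<le> - ln r0" by simp
    also have "\<dots> \<le> 2 * (1 - r0)" using minus_ln_one_minus_le[of "1 - r0"] r0 by simp
    finally have "U \<bar>t\<bar> \<le> 2 * (1 - r0)" using class_UD(2)[OF U, of t] by (cases "t \<ge> 0") auto
    moreover have "\<bar>t\<bar> \<in> {0<..pi}" using t by auto
    ultimately have "\<bar>t\<bar> \<le> B" using sublevel by blast
    then show ?thesis by (auto simp: A_def)
  qed (auto simp: A_def)
  moreover have "closed A" unfolding A_def by (intro closed_Un) auto
  then have "A \<in> sets lborel" by simp
  ultimately have "outer_lebesgue S \<le> emeasure lebesgue A"
    unfolding outer_lebesgue_def by (intro INF_lower) auto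
  also have "\<dots> = emeasure lborel A"
    using \<open>A \<in> sets lborel\<close> by (simp add: emeasure_completion main_part_sets)
  also have "\<dots> \<le> emeasure lborel {-pi, 0} + emeasure lborel {-B..B}"
    unfolding A_def by (rule emeasure_subadditive) auto
  also have "\<dots> = ennreal (2 * B)"
    using \<open>B \<ge> 0\<close> by (simp add: emeasure_lborel_countable)
  finally have "outer_lebesgue S / ennreal (2 * pi) \<le> ennreal (2 * B) / ennreal (2 * pi)"
    by (rule divide_right_mono_ennreal)
  also have "\<dots> = ennreal (B / pi)" using \<open>B \<ge> 0\<close> by (simp add: divide_ennreal)
  finally show ?thesis unfolding mu_phi_def S_def .
qed

lemma class_U_exp_pos:
  assumes "class_U U" "0 \<le> y"
  shows "U (exp (- y)) > 0"
proof -
  have "exp (- y) \<le> 1" using assms(2) by simp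
  then have "exp (- y) \<le> pi" using pi_gt3 by linarith
  then show ?thesis using class_U_pos[OF assms(1), of "exp (- y)"] by simp
qed

lemma eta_U_mono:
  assumes U: "class_U U" and "0 \<le> y" "y \<le> y'"
  shows "eta_U U y \<le> eta_U U y'"
proof -
  have "exp (- y) \<le> 1" using assms by simp
  then have "exp (- y) \<le> pi" using pi_gt3 by linarith
  moreover have "exp (- y') \<le> exp (- y)" using assms by simp
  moreover from calculation have "exp (- y') \<le> pi" by linarith
  ultimately have "U (exp (- y')) \<le> U (exp (- y))"
    by (intro mono_onD[OF class_UD(4)[OF U]]) auto
  then show ?thesis
    using class_U_exp_pos[OF U, of y'] assms unfolding eta_U_def by simp
qed

lemma isCont_eta_U:
  assumes U: "class_U U" and "0 \<le> y"
  shows "isCont (eta_U U) y"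
proof -
  have "isCont U x" for x
    using class_UD(1)[OF U] by (simp add: continuous_on_eq_continuous_at)
  then have "isCont (\<lambda>y. - ln (U (exp (- y)))) y"
    using class_U_exp_pos[OF assms]
    by (intro continuous_intros continuous_at_compose[OF _ \<open>isCont U _\<close>, unfolded o_def]) auto
  then show ?thesis unfolding eta_U_def[abs_def] .
qed

lemma filterlim_eta_U_at_top:
  assumes U: "class_U U"
  shows "filterlim (eta_U U) at_top at_top"
proof -
  have "((\<lambda>y. exp (- y)) \<longlongrightarrow> 0) (at_top :: real filter)"
    using filterlim_compose[OF exp_at_bot filterlim_uminus_at_bot_at_top] .
  then have "((\<lambda>y. U (exp (- y))) \<longlongrightarrow> 0) at_top"
    using isCont_tendsto_compose[of 0 U] class_UD(1,5)[OF U]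
    by (simp add: continuous_on_eq_continuous_at)
  moreover have "eventually (\<lambda>y. U (exp (- y)) \<in> {0<..} \<and> U (exp (- y)) \<noteq> 0) at_top"
  proof (rule eventually_mono[OF eventually_ge_at_top[of 0]])
    fix y :: real
    assume "0 \<le> y"
    then have "0 < U (exp (- y))" by (rule class_U_exp_pos[OF U])
    then show "U (exp (- y)) \<in> {0<..} \<and> U (exp (- y)) \<noteq> 0" by simp
  qed
  ultimately have "filterlim (\<lambda>y. U (exp (- y))) (at_right 0) at_top"
    unfolding filterlim_at by blast
  then have "filterlim (\<lambda>y. ln (U (exp (- y)))) at_bot at_top"
    by (rule filterlim_compose[OF ln_at_0])
  then show ?thesis
    unfolding eta_U_def filterlim_uminus_at_bot by simp
qed

lemma omega_U_fixed_point:
  assumes U: "class_U U" and x: "0 \<le> x" "1 \<le> eta_U U x"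
  shows "1 \<le> omega_U U x" "eta_U U (x / omega_U U x) = omega_U U x"
proof -
  have "\<exists>w. 1 \<le> w \<and> w \<le> eta_U U x \<and> eta_U U (x / w) - w = 0"
  proof (rule IVT2)
    have "x / eta_U U x \<le> x" using x by (simp add: divide_le_eq mult_le_cancel_left1)
    then show "eta_U U (x / eta_U U x) - eta_U U x \<le> 0"
      using x eta_U_mono[OF U] by simp
    show "0 \<le> eta_U U (x / 1) - 1" using x by simp
    show "\<forall>w. 1 \<le> w \<and> w \<le> eta_U U x \<longrightarrow> isCont (\<lambda>w. eta_U U (x / w) - w) w"
    proof (intro allI impI)
      fix w :: real assume w: "1 \<le> w \<and> w \<le> eta_U U x"
      then have "isCont (eta_U U) (x / w)" using x by (intro isCont_eta_U[OF U]) auto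
      with w show "isCont (\<lambda>w. eta_U U (x / w) - w) w"
        by (intro continuous_intros continuous_at_compose[of w "\<lambda>w. x / w" "eta_U U", unfolded o_def]) auto
    qed
  qed (use x in auto)
  then obtain w where w: "1 \<le> w" "eta_U U (x / w) = w" by auto
  have "w' = w" if w': "1 \<le> w'" "eta_U U (x / w') = w'" for w'
  \<comment> \<open>w \<mapsto> eta_U U (x / w) is non-increasing, so it meets the identity only once\<close>
  proof (rule ccontr)
    assume "w' \<noteq> w"
    then consider "w' < w" | "w < w'" by linarith
    then show False
    proof cases
      case 1
      then have "x / w \<le> x / w'" using w' x by (intro divide_left_mono) auto
      then show False using 1 w w' x eta_U_mono[OF U, of "x / w" "x / w'"] by simp
    next
      case 2
      then have "x / w' \<le> x / w" using w x by (intro divide_left_mono) auto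
      then show False using 2 w w' x eta_U_mono[OF U, of "x / w'" "x / w"] by simp
    qed
  qed
  then have "omega_U U x = w" unfolding omega_U_def
    using w by (intro the1_equality) blast+
  with w show "1 \<le> omega_U U x" "eta_U U (x / omega_U U x) = omega_U U x" by simp_all
qed

lemma eventually_omega_U:
  assumes U: "class_U U"
  shows "\<forall>\<^sub>F n in sequentially. 1 \<le> omega_U U (real n) \<and>
    eta_U U (real n / omega_U U (real n)) = omega_U U (real n) \<and>
    M \<le> real n / omega_U U (real n) \<and> M \<le> omega_U U (real n)"
proof -
  obtain Y where Y: "\<And>y. Y \<le> y \<Longrightarrow> max M 1 \<le> eta_U U y"
    using filterlim_eta_U_at_top[OF U] unfolding filterlim_at_top eventually_at_top_linorder by blast
  define M' where "M' = max (max M 0) Y"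
  have pointwise: "1 \<le> omega_U U (real n) \<and> eta_U U (real n / omega_U U (real n)) = omega_U U (real n) \<and>
      M \<le> real n / omega_U U (real n) \<and> M \<le> omega_U U (real n)"
    if n: "max Y (M' * max (eta_U U M') 1) < real n" for n
  proof -
    have "1 \<le> eta_U U (real n)" using Y[of "real n"] n by auto
    from omega_U_fixed_point[OF U _ this]
    have w: "1 \<le> omega_U U (real n)" "eta_U U (real n / omega_U U (real n)) = omega_U U (real n)"
      by auto
    define w where "w = omega_U U (real n)"
    define m where "m = real n / w"
    have w': "1 \<le> w" "eta_U U m = w" "real n = m * w" and "0 \<le> m"
      using w by (auto simp: w_def m_def)
    have "M' \<le> m"
    \<comment> \<open>otherwise n = m w would be bounded in terms of M' alone\<close>
    proof (rule ccontr)
      assume "\<not> M' \<le> m"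
      then have "w \<le> max (eta_U U M') 1"
        using w' \<open>0 \<le> m\<close> eta_U_mono[OF U, of m M'] by auto
      then have "m * w \<le> M' * max (eta_U U M') 1"
        using \<open>\<not> M' \<le> m\<close> \<open>0 \<le> m\<close> w' by (intro mult_mono) auto
      with n w' show False by linarith
    qed
    then have "max M 1 \<le> w" using Y[of m] w' by (simp add: M'_def)
    with \<open>M' \<le> m\<close> w show ?thesis by (simp add: w_def m_def M'_def)
  qed
  have "\<forall>\<^sub>F n in sequentially. max Y (M' * max (eta_U U M') 1) < real n"
    by (rule eventually_compose_filterlim[OF eventually_gt_at_top filterlim_real_sequentially])
  then show ?thesis by (rule eventually_mono) (rule pointwise)
qed

lemma eta_U_le_linear:
  assumes U: "class_U U" and log_deriv: "\<forall>t. 0 < t \<and> t \<le> pi/2 \<longrightarrow> deriv U t / U t \<le> \<beta> / t"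
    and "0 \<le> m" "m \<le> x"
  shows "eta_U U x \<le> eta_U U m + \<beta> * (x - m)"
proof -
  have "exp (- m) \<le> 1" using assms by simp
  then have em: "exp (- m) \<le> pi / 2" using pi_gt3 by linarith
  have "ln (U (exp (- m))) - ln (U (exp (- x))) \<le> \<beta> * (ln (exp (- m)) - ln (exp (- x)))"
  proof (rule ln_diff_le_of_log_deriv_le)
    fix y assume y: "exp (- x) \<le> y" "y \<le> exp (- m)"
    then have "0 < y" "y \<le> pi / 2" using em exp_gt_zero[of "- x"] by linarith+
    then show "0 < U y" "U differentiable (at y)" "deriv U y / U y \<le> \<beta> / y"
      using class_U_pos[OF U, of y] class_U_DERIV[OF U, of y] log_deriv pi_gt3
      by (auto simp: real_differentiable_def)
  qed (use assms in auto)
  then show ?thesis unfolding eta_U_def by simp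
qed

lemma eta_U_large_on_U_sublevel:
  assumes U: "class_U U" and m: "0 \<le> m" and \<tau>: "ln 2 < (\<tau> - 1) * eta_U U m"
    and \<epsilon>: "0 < \<epsilon>" "\<epsilon> \<le> exp (- \<tau> * eta_U U m)" and t: "t \<in> {0<..pi}" and Ut: "U t \<le> 2 * \<epsilon>"
  shows "m < - ln t" "- ln \<epsilon> - ln 2 \<le> eta_U U (- ln t)"
proof -
  show "m < - ln t"
  proof (rule ccontr)
    assume "\<not> m < - ln t"
    then have "exp (- m) \<le> t" using t ln_ge_iff[of t "- m"] by simp
    then have "U (exp (- m)) \<le> U t"
      using t by (intro mono_onD[OF class_UD(4)[OF U]]) auto
    moreover have "U (exp (- m)) = exp (- eta_U U m)"
      using class_U_exp_pos[OF U m] unfolding eta_U_def by simp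
    ultimately have "exp (- eta_U U m) \<le> 2 * exp (- \<tau> * eta_U U m)"
      using Ut \<epsilon> by linarith
    also have "\<dots> = exp (ln 2 + - \<tau> * eta_U U m)"
      by (subst exp_add) simp
    finally have "- eta_U U m \<le> ln 2 - \<tau> * eta_U U m" by simp
    moreover have "(\<tau> - 1) * eta_U U m = \<tau> * eta_U U m - eta_U U m"
      by (simp add: algebra_simps)
    ultimately show False using \<tau> by linarith
  qed
  have "0 < U t" using class_U_pos[OF U t] .
  then have "ln (U t) \<le> ln (2 * \<epsilon>)" using Ut by simp
  also have "\<dots> = ln 2 + ln \<epsilon>" using \<epsilon>(1) by (simp add: ln_mult)
  finally show "- ln \<epsilon> - ln 2 \<le> eta_U U (- ln t)" using t by (simp add: eta_U_def)
qed

lemma mu_phi_carleson_square_le_of_eta_U_tail: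
  fixes U :: "real \<Rightarrow> real"
  assumes U: "class_U U" and "0 \<le> m" and w: "eta_U U m = w" "1 \<le> w" and \<tau>w: "ln 2 < (\<tau> - 1) * w"
    and tail: "\<And>x L. m < x \<Longrightarrow> \<tau> * w \<le> L \<Longrightarrow> L - ln 2 \<le> eta_U U x \<Longrightarrow> L + c * m - ln pi \<le> x"
    and r0: "r0 < 1" "1 - r0 \<le> exp (- \<tau> * w)"
  shows "mu_phi (phi_U_bd U) r (carleson_square r0 t0) \<le> ennreal (exp (- c * m) * (1 - r0))"
proof -
  define \<epsilon> where "\<epsilon> = 1 - r0"
  have \<epsilon>: "0 < \<epsilon>" "\<epsilon> \<le> exp (- \<tau> * eta_U U m)" using r0 w by (auto simp: \<epsilon>_def)
  have "exp (- \<tau> * w) \<le> exp (- ln 2)" using \<tau>w w by (simp add: algebra_simps)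
  then have "\<epsilon> \<le> 1/2" using \<epsilon> w by (simp add: exp_minus)
  define B where "B = pi * exp (- c * m) * \<epsilon>"
  have "t \<le> B" if t: "t \<in> {0<..pi}" "U t \<le> 2 * (1 - r0)" for t
  proof -
    have x: "m < - ln t" "- ln \<epsilon> - ln 2 \<le> eta_U U (- ln t)"
      using eta_U_large_on_U_sublevel[OF U \<open>0 \<le> m\<close> _ \<epsilon> t(1)] \<tau>w w t(2) by (auto simp: \<epsilon>_def)
    have "ln \<epsilon> \<le> ln (exp (- \<tau> * w))" using \<epsilon> w by (subst ln_le_cancel_iff) auto
    then have "- ln \<epsilon> + c * m - ln pi \<le> - ln t" using tail[OF x(1) _ x(2)] by simp
    then have "ln t \<le> ln B" using \<epsilon> by (simp add: B_def ln_mult)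
    then show "t \<le> B" using t \<epsilon> by (simp add: B_def)
  qed
  then have "mu_phi (phi_U_bd U) r (carleson_square r0 t0) \<le> ennreal (B / pi)"
    using \<open>\<epsilon> \<le> 1/2\<close> \<epsilon> r0 by (intro mu_phi_carleson_square_le[OF U]) (auto simp: \<epsilon>_def B_def)
  also have "B / pi = exp (- c * m) * (1 - r0)" by (simp add: B_def \<epsilon>_def)
  finally show ?thesis .
qed

lemma carleson_estimate_of_eta_U_growth:
  fixes U :: "real \<Rightarrow> real"
  assumes U: "class_U U" and \<tau>: "\<tau> > 1"
    and growth: "\<forall>\<^sub>F n in sequentially. \<forall>x L. real n / omega_U U (real n) < x \<and>
      \<tau> * omega_U U (real n) \<le> L \<and> L - ln 2 \<le> eta_U U x \<longrightarrow>
      L + c * (real n / omega_U U (real n)) - ln pi \<le> x"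
  shows "\<exists>N::nat. \<forall>n\<ge>N. \<forall>r r0 t0. 0 < r \<and> r < 1 \<and> 0 \<le> r0 \<and> r0 < 1 \<and>
      1 - r0 \<le> exp (- \<tau> * omega_U U (real n)) \<longrightarrow>
      mu_phi (phi_U_bd U) r (carleson_square r0 t0)
        \<le> ennreal (exp (- c * real n / omega_U U (real n)) * (1 - r0))"
proof -
  obtain N where N: "\<And>n. N \<le> n \<Longrightarrow> (1 \<le> omega_U U (real n) \<and>
      eta_U U (real n / omega_U U (real n)) = omega_U U (real n) \<and>
      2 * ln 2 / (\<tau> - 1) \<le> real n / omega_U U (real n) \<and> 2 * ln 2 / (\<tau> - 1) \<le> omega_U U (real n)) \<and>
      (\<forall>x L. real n / omega_U U (real n) < x \<and> \<tau> * omega_U U (real n) \<le> L \<and> L - ln 2 \<le> eta_U U x \<longrightarrow>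
        L + c * (real n / omega_U U (real n)) - ln pi \<le> x)"
    using eventually_conj[OF eventually_omega_U[OF U] growth] unfolding eventually_sequentially by blast
  have "mu_phi (phi_U_bd U) r (carleson_square r0 t0)
      \<le> ennreal (exp (- c * real n / omega_U U (real n)) * (1 - r0))"
    if n: "N \<le> n" and r0: "r0 < 1" "1 - r0 \<le> exp (- \<tau> * omega_U U (real n))" for n r r0 t0
  proof -
    define w where "w = omega_U U (real n)"
    define m where "m = real n / w"
    have w: "1 \<le> w" "eta_U U m = w" "2 * ln 2 / (\<tau> - 1) \<le> w" and m: "2 * ln 2 / (\<tau> - 1) \<le> m"
      and tail: "\<And>x L. m < x \<Longrightarrow> \<tau> * w \<le> L \<Longrightarrow> L - ln 2 \<le> eta_U U x \<Longrightarrow> L + c * m - ln pi \<le> x"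
      using N[OF n] by (auto simp: w_def m_def)
    have "0 \<le> 2 * ln 2 / (\<tau> - 1)" using \<tau> by simp
    with m have "0 \<le> m" by linarith
    have "2 * ln 2 \<le> (\<tau> - 1) * w" using w(3) \<tau> by (simp add: field_simps)
    then have "ln 2 < (\<tau> - 1) * w" using ln_gt_zero[of 2] by linarith
    from mu_phi_carleson_square_le_of_eta_U_tail[OF U \<open>0 \<le> m\<close> w(2,1) this tail r0[folded w_def]]
    show ?thesis by (simp add: m_def w_def)
  qed
  then show ?thesis by blast
qed

lemma eta_U_tail_of_log_deriv_le:
  assumes U: "class_U U" and \<delta>: "0 < \<delta>" "\<delta> < 1"
    and log_deriv: "\<forall>t. 0 < t \<and> t \<le> pi/2 \<longrightarrow> deriv U t / U t \<le> (1 - \<delta>) / t"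
    and "0 \<le> m" and w: "eta_U U m = w"
    and slack: "ln 2 \<le> (1 - \<delta>)\<^sup>2 * m + (\<delta> * \<tau> - 1) * w"
    and x: "m < x" "\<tau> * w \<le> L" "L - ln 2 \<le> eta_U U x"
  shows "L + \<delta> * m - ln pi \<le> x"
proof -
  define \<beta> where "\<beta> = 1 - \<delta>"
  have "eta_U U x \<le> w + \<beta> * (x - m)"
    using eta_U_le_linear[OF U log_deriv[folded \<beta>_def] \<open>0 \<le> m\<close>] x w by simp
  moreover have "\<delta> * (\<tau> * w) \<le> \<delta> * L" using x \<delta> by simp
  moreover have "\<beta> * x - \<beta> * (L + \<delta> * m) =
      \<beta> * (x - m) - (L - ln 2 - w) + (\<delta> * L - \<delta> * (\<tau> * w)) + (\<beta>\<^sup>2 * m + (\<delta> * \<tau> - 1) * w - ln 2)"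
    by (simp add: \<beta>_def power2_eq_square algebra_simps)
  ultimately have "\<beta> * (L + \<delta> * m) \<le> \<beta> * x" using x slack[folded \<beta>_def] by linarith
  then have "L + \<delta> * m \<le> x" using \<delta> by (simp add: \<beta>_def)
  moreover have "0 \<le> ln pi" using pi_gt3 by (intro ln_ge_zero) linarith
  ultimately show ?thesis by linarith
qed

lemma eventually_eta_U_growth_of_log_deriv_le:
  assumes U: "class_U U" and \<delta>: "0 < \<delta>" "\<delta> < 1" and \<tau>: "\<tau> > 1"
    and log_deriv: "\<forall>t. 0 < t \<and> t \<le> pi/2 \<longrightarrow> deriv U t / U t \<le> (1 - \<delta>) / t"
  shows "\<forall>\<^sub>F n in sequentially. \<forall>x L. real n / omega_U U (real n) < x \<and>
      \<tau> * omega_U U (real n) \<le> L \<and> L - ln 2 \<le> eta_U U x \<longrightarrow>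
      L + \<delta> * (real n / omega_U U (real n)) - ln pi \<le> x"
proof -
  define \<beta> where "\<beta> = 1 - \<delta>"
  have \<beta>: "0 < \<beta>" using \<delta> by (simp add: \<beta>_def)
  define C where "C = eta_U U 0"
  define M where "M = max 0 (max (ln 2 / \<beta>\<^sup>2) ((ln 2 + \<bar>C\<bar>) / (\<beta> * \<delta> * (\<tau> - 1))))"
  show ?thesis
    using eventually_omega_U[OF U, of M]
  proof eventually_elim
    case (elim n)
    define w where "w = omega_U U (real n)"
    define m where "m = real n / w"
    have w: "1 \<le> w" "eta_U U m = w" and "M \<le> m"
      using elim by (simp_all add: w_def m_def)
    then have "0 \<le> m" by (simp add: M_def)
    have w_le: "w \<le> C + \<beta> * m"
      using eta_U_le_linear[OF U log_deriv[folded \<beta>_def] order_refl \<open>0 \<le> m\<close>] w by (simp add: C_def)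
    have "ln 2 \<le> \<beta>\<^sup>2 * m + (\<delta> * \<tau> - 1) * w"
    proof (cases "1 \<le> \<delta> * \<tau>")
      case True
      have "ln 2 \<le> \<beta>\<^sup>2 * m" using \<open>M \<le> m\<close> \<beta> by (simp add: M_def field_simps)
      moreover have "0 \<le> (\<delta> * \<tau> - 1) * w" using True w by simp
      ultimately show ?thesis by linarith
    next
      case False
      have "(\<delta> * \<tau> - 1) * (C + \<beta> * m) \<le> (\<delta> * \<tau> - 1) * w"
        using False w_le by (intro mult_left_mono_neg) auto
      moreover have "ln 2 + \<bar>C\<bar> \<le> \<beta> * \<delta> * (\<tau> - 1) * m"
        using \<open>M \<le> m\<close> \<beta> \<delta> \<tau> by (simp add: M_def field_simps)
      moreover have "(1 - \<delta> * \<tau>) * C \<le> (1 - \<delta> * \<tau>) * \<bar>C\<bar>"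
        using False by (intro mult_left_mono) auto
      moreover have "(1 - \<delta> * \<tau>) * \<bar>C\<bar> \<le> \<bar>C\<bar>"
        using False \<delta> \<tau> by (intro mult_left_le_one_le) auto
      moreover have "\<beta>\<^sup>2 * m + (\<delta> * \<tau> - 1) * (C + \<beta> * m) = \<beta> * \<delta> * (\<tau> - 1) * m - (1 - \<delta> * \<tau>) * C"
        by (simp add: \<beta>_def power2_eq_square algebra_simps)
      ultimately show ?thesis by linarith
    qed
    then show ?case
      using eta_U_tail_of_log_deriv_le[OF U \<delta> log_deriv \<open>0 \<le> m\<close> w(2)]
      by (auto simp: w_def m_def \<beta>_def)
  qed
qed

lemma ln_eta_U_diff_le:
  assumes U: "class_U U" and diff: "\<forall>x\<ge>0. 1 \<le> eta_U U x \<longrightarrow> eta_U U differentiable (at x)"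
    and slow: "\<And>y. X \<le> y \<Longrightarrow> deriv (eta_U U) y / eta_U U y \<le> \<kappa> / y"
    and "0 < m" "X \<le> m" "m \<le> x" "1 \<le> eta_U U m"
  shows "ln (eta_U U x) - ln (eta_U U m) \<le> \<kappa> * (ln x - ln m)"
proof (rule ln_diff_le_of_log_deriv_le)
  fix y assume y: "m \<le> y" "y \<le> x"
  then have "1 \<le> eta_U U y" using assms eta_U_mono[OF U, of m y] by simp
  then show "0 < eta_U U y" "eta_U U differentiable (at y)" "deriv (eta_U U) y / eta_U U y \<le> \<kappa> / y"
    using y assms by auto
qed (use assms in auto)

lemma Bernoulli_ratio_lower_bound:
  fixes q x m :: real
  assumes "0 < m" "0 < x" "1 < \<sigma>" "\<sigma> \<le> q" "9 \<le> (real K - 1) * (\<sigma> - 1)"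
    and "real K * ln q \<le> ln x - ln m"
  shows "(q + 9) * m \<le> x"
proof -
  have "ln (q ^ K) \<le> ln (x / m)" using assms by (simp add: ln_realpow ln_div)
  then have "q ^ K \<le> x / m" using assms by simp
  moreover have "1 + real K * (q - 1) \<le> q ^ K"
    using Bernoulli_inequality[of "q - 1" K] assms by simp
  moreover have "1 + real K * (q - 1) = q + (real K - 1) * (q - 1)"
    by (simp add: algebra_simps)
  moreover have "0 \<le> real K - 1"
  proof (rule ccontr)
    assume "\<not> 0 \<le> real K - 1"
    then have "(real K - 1) * (\<sigma> - 1) \<le> 0" using assms by (intro mult_nonpos_nonneg) auto
    with assms show False by linarith
  qed
  then have "(real K - 1) * (\<sigma> - 1) \<le> (real K - 1) * (q - 1)"
    using assms by (intro mult_left_mono) auto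
  ultimately have "q + 9 \<le> x / m" using assms(5) by linarith
  then show ?thesis using assms by (simp add: field_simps)
qed

lemma eta_U_tail_of_slow_log_deriv:
  assumes U: "class_U U" and diff: "\<forall>x\<ge>0. 1 \<le> eta_U U x \<longrightarrow> eta_U U differentiable (at x)"
    and slow: "\<And>y. X \<le> y \<Longrightarrow> deriv (eta_U U) y / eta_U U y \<le> (1 / real K) / y"
    and K: "1 < \<sigma>" "9 \<le> (real K - 1) * (\<sigma> - 1)"
    and m: "1 \<le> m" "X \<le> m" and w: "eta_U U m = w" "1 \<le> w" "w \<le> m" "ln 2 \<le> (\<tau> - \<sigma>) * w"
    and x: "m < x" "\<tau> * w \<le> L" "L - ln 2 \<le> eta_U U x"
  shows "L + 8 * m - ln pi \<le> x"
proof -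
  define q where "q = (L - ln 2) / w"
  have qw: "q * w = L - ln 2" using w by (simp add: q_def)
  have "\<sigma> * w \<le> L - ln 2" using x w by (simp add: algebra_simps)
  then have "\<sigma> \<le> q" using w by (simp add: q_def pos_le_divide_eq)
  then have q: "\<sigma> \<le> q" "0 < q" using K by linarith+
  then have "0 < q * w" using w by simp
  then have "ln (q * w) \<le> ln (eta_U U x)" using x qw by (subst ln_le_cancel_iff) auto
  moreover have "ln (eta_U U x) - ln w \<le> (1 / real K) * (ln x - ln m)"
    using ln_eta_U_diff_le[OF U diff slow _ m(2), of x] m x w by simp
  ultimately have "ln q \<le> (ln x - ln m) / real K"
    using q w by (simp add: ln_mult)
  moreover have "0 < real K" using K by (cases K) auto
  ultimately have "real K * ln q \<le> ln x - ln m"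
    by (simp add: pos_le_divide_eq mult.commute)
  then have "(q + 9) * m \<le> x"
    using Bernoulli_ratio_lower_bound[OF _ _ K(1) q(1) K(2)] m x by simp
  moreover have "L - ln 2 \<le> q * m"
    unfolding qw[symmetric] using q \<open>w \<le> m\<close> by (intro mult_left_mono) auto
  moreover have "ln 2 \<le> m" using m ln_2_less_1 by linarith
  moreover have "0 \<le> ln pi" using pi_gt3 by (intro ln_ge_zero) linarith
  moreover have "(q + 9) * m = q * m + 9 * m" by (simp add: algebra_simps)
  ultimately show ?thesis by linarith
qed

lemma eventually_eta_U_growth_of_slow_log_deriv:
  assumes U: "class_U U" and \<alpha>: "0 < \<alpha>" "\<alpha> < 1" and \<tau>: "\<tau> > 1"
    and log_deriv: "\<forall>t. 0 < t \<and> t \<le> pi/2 \<longrightarrow> deriv U t / U t \<le> \<alpha> / t"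
    and diff: "\<forall>x\<ge>0. 1 \<le> eta_U U x \<longrightarrow> eta_U U differentiable (at x)"
    and slow: "(\<lambda>x. deriv (eta_U U) x / eta_U U x) \<in> o[at_top](\<lambda>x. 1 / x)"
  shows "\<forall>\<^sub>F n in sequentially. \<forall>x L. real n / omega_U U (real n) < x \<and>
      \<tau> * omega_U U (real n) \<le> L \<and> L - ln 2 \<le> eta_U U x \<longrightarrow>
      L + 8 * (real n / omega_U U (real n)) - ln pi \<le> x"
proof -
  define \<sigma> where "\<sigma> = (\<tau> + 1) / 2"
  define K :: nat where "K = nat \<lceil>9 / (\<sigma> - 1)\<rceil> + 1"
  have \<sigma>: "1 < \<sigma>" using \<tau> by (simp add: \<sigma>_def)
  have "9 / (\<sigma> - 1) \<le> real K - 1" unfolding K_def by linarith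
  then have K: "9 \<le> (real K - 1) * (\<sigma> - 1)" using \<sigma> by (simp add: field_simps)
  have "0 < 1 / real K" by (simp add: K_def)
  then obtain X0 where X0: "\<And>y. X0 \<le> y \<Longrightarrow> norm (deriv (eta_U U) y / eta_U U y) \<le> 1 / real K * norm (1 / y)"
    using landau_o.smallD[OF slow] unfolding eventually_at_top_linorder by blast
  define X where "X = max X0 1"
  have X: "deriv (eta_U U) y / eta_U U y \<le> (1 / real K) / y" if "X \<le> y" for y
  proof -
    have "deriv (eta_U U) y / eta_U U y \<le> norm (deriv (eta_U U) y / eta_U U y)"
      unfolding real_norm_def by (rule abs_ge_self)
    also have "\<dots> \<le> 1 / real K * norm (1 / y)"
      using X0[of y] that by (simp add: X_def)
    also have "\<dots> = (1 / real K) / y"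
      using that by (simp add: X_def)
    finally show ?thesis .
  qed
  define C where "C = eta_U U 0"
  define M where "M = max X (max (2 * ln 2 / (\<tau> - 1)) (\<bar>C\<bar> / (1 - \<alpha>)))"
  show ?thesis
    using eventually_omega_U[OF U, of M]
  proof eventually_elim
    case (elim n)
    define w where "w = omega_U U (real n)"
    define m where "m = real n / w"
    have w: "1 \<le> w" "eta_U U m = w" "2 * ln 2 / (\<tau> - 1) \<le> w" and "M \<le> m"
      using elim by (auto simp: w_def m_def M_def)
    then have m: "1 \<le> m" "X \<le> m" by (auto simp: M_def X_def)
    have "w \<le> C + \<alpha> * m"
      using eta_U_le_linear[OF U log_deriv order_refl, of m] m w by (simp add: C_def)
    moreover have "\<bar>C\<bar> \<le> (1 - \<alpha>) * m" using \<open>M \<le> m\<close> \<alpha> by (simp add: M_def field_simps)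
    ultimately have "w \<le> m" by (simp add: algebra_simps)
    moreover have "ln 2 \<le> (\<tau> - \<sigma>) * w" using w(3) \<tau> by (simp add: \<sigma>_def field_simps)
    ultimately show ?case
      using eta_U_tail_of_slow_log_deriv[OF U diff X \<sigma> K m w(2,1)] by (auto simp: w_def m_def)
  qed
qed

theorem lemma6p2:
  fixes U :: "real \<Rightarrow> real" and \<tau> :: real
  assumes "class_Uc U" and "\<tau> > 1"
  shows
    "(\<forall>\<delta>. 0 < \<delta> \<and> \<delta> < 1 \<and>
          (\<forall>t. 0 < t \<and> t \<le> pi/2 \<longrightarrow> deriv U t / U t \<le> (1 - \<delta>) / t) \<longrightarrow>
       (\<exists>N::nat. \<forall>n\<ge>N. \<forall>r r0 t0. 0 < r \<and> r < 1 \<and> 0 \<le> r0 \<and> r0 < 1 \<and>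
            1 - r0 \<le> exp (- \<tau> * omega_U U (real n)) \<longrightarrow>
            mu_phi (phi_U_bd U) r (carleson_square r0 t0)
              \<le> ennreal (exp (- \<delta> * real n / omega_U U (real n)) * (1 - r0))))
     \<and>
     ((\<forall>x\<ge>0. 1 \<le> eta_U U x \<longrightarrow> eta_U U differentiable (at x)) \<and>
      (\<lambda>x. deriv (eta_U U) x / eta_U U x) \<in> o[at_top](\<lambda>x. 1 / x) \<longrightarrow>
       (\<exists>N::nat. \<forall>n\<ge>N. \<forall>r r0 t0. 0 < r \<and> r < 1 \<and> 0 \<le> r0 \<and> r0 < 1 \<and>
            1 - r0 \<le> exp (- \<tau> * omega_U U (real n)) \<longrightarrow>
            mu_phi (phi_U_bd U) r (carleson_square r0 t0)
              \<le> ennreal (exp (- 8 * real n / omega_U U (real n)) * (1 - r0))))"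
proof -
  have U: "class_U U" using assms(1) unfolding class_Uc_def by blast
  obtain \<alpha> where \<alpha>: "0 < \<alpha>" "\<alpha> < 1"
    and log_deriv: "\<forall>t. 0 < t \<and> t \<le> pi/2 \<longrightarrow> deriv U t / U t \<le> \<alpha> / t"
    using assms(1) unfolding class_Uc_def by blast
  show ?thesis
    using eventually_eta_U_growth_of_log_deriv_le[OF U _ _ assms(2)]
      eventually_eta_U_growth_of_slow_log_deriv[OF U \<alpha> assms(2) log_deriv]
    by (intro conjI allI impI carleson_estimate_of_eta_U_growth[OF U assms(2)]) blast+
qed

end
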